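(* Let $L\ge3$, $m\ge1$, $x_1>\cdots>x_N$ real, $\mathbf X=(x_1,\dots,x_N)^T$. Let $A_{L,\mathrm{par}}(\mathbf X)$ be the set of all vectors obtainable as the (sign-normalized) output of a single sign-activated unit with hidden widths $m_1=\cdots=m_{L-2}=m$ and $m_{L-1}=1$. Then every vector in $A_{L,\mathrm{par}}(\mathbf X)$ belongs to $\mathcal H^{(m)}$, i.e. starts with $1$ and switches at most $m$ times.
   Context: $\sigma(x)=\mathrm{sign}(x)$ with $\mathrm{sign}(x)=1$ if $x\ge0$, $-1$ if $x<0$, applied entrywise. A single unit with widths $m_0=1,m_1,\dots,m_{L-1}=1$ maps $\mathbf X$ to $\mathbf X^{(L)}$ via $\mathbf X^{(1)}=\mathbf X$ and $\mathbf X^{(l+1)}=\sigma(\mathbf X^{(l)}\mathbf W^{(l)}+\mathbf 1\mathbf b^{(l)})\in\{-1,1\}^{N\times m_l}$ for $l\in[L-1]$, with arbitrary $\mathbf W^{(l)}\in\mathbb R^{m_{l-1}\times m_l}$, $\mathbf b^{(l)}\in\mathbb R^{1\times m_l}$. $A_{L,\mathrm{par}}(\mathbf X)$ is the set of all vectors $\epsilon\mathbf X^{(L)}\in\{-1,1\}^N$ over all such weights and biases, where $\epsilon\in\{-1,1\}$ is chosen so that the first entry is $1$. A vector $\mathbf h\in\{-1,1\}^N$ switches at $n>1$ if $h_n\neq h_{n-1}$; $\mathcal H^{(K)}$ is the set of vectors in $\{-1,1\}^N$ with first entry $1$ that switch at most $K$ times. *)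

theory Defs
  imports Complex_Main
begin

definition sign_act :: "real \<Rightarrow> real" where
  "sign_act x = (if x \<ge> 0 then 1 else -1)"

text \<open>Row n of the feature matrix X^(l), as a function of the scalar input t = x_n.
  w l is the width m_l (w 0 = m_0 = 1); W l and b l are the weight matrix W^(l)
  (entries W l i j, i < m_{l-1}, j < m_l) and bias b^(l).\<close>
primrec unit_feat ::
  "(nat \<Rightarrow> nat) \<Rightarrow> (nat \<Rightarrow> nat \<Rightarrow> nat \<Rightarrow> real) \<Rightarrow> (nat \<Rightarrow> nat \<Rightarrow> real)
   \<Rightarrow> real \<Rightarrow> nat \<Rightarrow> nat \<Rightarrow> real" where
  "unit_feat w W b t 0 = (\<lambda>j. if j = 0 then t else 0)"
| "unit_feat w W b t (Suc l) =
     (if l = 0 then (\<lambda>j. if j = 0 then t else 0)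
      else (\<lambda>j. sign_act ((\<Sum>i<w (l - 1). unit_feat w W b t l i * W l i j) + b l j)))"

text \<open>Vectors in {-1,1}^N are represented as functions on nat, with entries at
  indices 1..N and value 0 elsewhere.\<close>
definition A_par :: "nat \<Rightarrow> (nat \<Rightarrow> nat) \<Rightarrow> nat \<Rightarrow> (nat \<Rightarrow> real) \<Rightarrow> (nat \<Rightarrow> real) set" where
  "A_par L w N x = {h. \<exists>W b (\<epsilon>::real). \<epsilon> \<in> {-1, 1} \<and>
      \<epsilon> * unit_feat w W b (x 1) L 0 = 1 \<and>
      h = (\<lambda>n. if 1 \<le> n \<and> n \<le> N then \<epsilon> * unit_feat w W b (x n) L 0 else 0)}"

definition switches_at :: "(nat \<Rightarrow> real) \<Rightarrow> nat \<Rightarrow> bool" where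
  "switches_at h n \<longleftrightarrow> 1 < n \<and> h n \<noteq> h (n - 1)"

definition H_switch :: "nat \<Rightarrow> nat \<Rightarrow> (nat \<Rightarrow> real) set" where
  "H_switch N K = {h. (\<forall>n. 1 \<le> n \<and> n \<le> N \<longrightarrow> h n \<in> {-1, 1}) \<and>
      (\<forall>n. \<not> (1 \<le> n \<and> n \<le> N) \<longrightarrow> h n = 0) \<and> h 1 = 1 \<and>
      card {n \<in> {1..N}. switches_at h n} \<le> K}"

end

theory Submission
  imports Defs
begin

text \<open>The output of the unit depends on the input t only through the m features of layer 2,
  each of which has the form sign(a t + c). Since the inputs are ordered, each such feature
  switches at most once along x_1, ..., x_N, and every switch of the output
  forces a switch of some feature. Assigning to each switch of the output one feature that
  switches there is therefore injective, so there are at most m switches.\<close>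

lemma sign_act_eq_iff: "sign_act y = sign_act z \<longleftrightarrow> (0 \<le> y \<longleftrightarrow> 0 \<le> z)"
  by (simp add: sign_act_def)

lemma unit_feat_in_pm:
  assumes "2 \<le> l"
  shows "unit_feat w W b t l j \<in> {-1, 1}"
proof -
  obtain k where "l = Suc k" "k \<noteq> 0"
    using assms by (cases l) auto
  then show ?thesis by (simp add: sign_act_def)
qed

lemma unit_feat_2:
  assumes "w 0 = 1"
  shows "unit_feat w W b t 2 j = sign_act (W 1 0 j * t + b 1 j)"
  using assms by (simp add: numeral_2_eq_2 mult.commute)

lemma unit_feat_eq_if_layer_2_eq:
  assumes "\<And>i. i < w 1 \<Longrightarrow> unit_feat w W b t 2 i = unit_feat w W b s 2 i" and "3 \<le> l"
  shows "unit_feat w W b t l = unit_feat w W b s l"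
  using \<open>3 \<le> l\<close>
proof (induction l)
  case 0
  then show ?case by simp
next
  case (Suc k)
  show ?case
  proof (cases "k = 2")
    case True
    have "(\<Sum>i<w 1. unit_feat w W b t 2 i * W 2 i j) = (\<Sum>i<w 1. unit_feat w W b s 2 i * W 2 i j)"
      for j using assms(1) by (intro sum.cong) auto
    with True show ?thesis by (simp add: numeral_2_eq_2)
  next
    case False
    with Suc show ?thesis by simp
  qed
qed

lemma mono_on_bool_changes_at_most_once:
  fixes P :: "nat \<Rightarrow> bool"
  assumes mono: "mono_on {k..n} P"
    and "k < p" "p \<le> n" "P p \<noteq> P (p - 1)"
    and "k < q" "q \<le> n" "P q \<noteq> P (q - 1)"
  shows "p = q"
proof -
  have up: "\<not> P (r - 1) \<and> P r" if "k < r" "r \<le> n" "P r \<noteq> P (r - 1)" for r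
  proof -
    have "P (r - 1) \<le> P r"
      using that by (intro mono_onD[OF mono]) auto
    with that show ?thesis by auto
  qed
  have False if "k < r" "r < r'" "r' \<le> n" "P r \<noteq> P (r - 1)" "P r' \<noteq> P (r' - 1)" for r r'
  proof -
    have "P r \<le> P (r' - 1)"
      using that by (intro mono_onD[OF mono]) auto
    with up[of r] up[of r'] that show False by auto
  qed
  with assms show ?thesis by (metis linorder_neqE_nat)
qed

lemma affine_threshold_changes_at_most_once:
  fixes x :: "nat \<Rightarrow> real"
  assumes anti: "antimono_on {k..n} x"
    and "k < p" "p \<le> n" "(0 \<le> a * x p + c) \<noteq> (0 \<le> a * x (p - 1) + c)"
    and "k < q" "q \<le> n" "(0 \<le> a * x q + c) \<noteq> (0 \<le> a * x (q - 1) + c)"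
  shows "p = q"
proof (cases "0 \<le> a")
  case True
  have "mono_on {k..n} (\<lambda>r. \<not> 0 \<le> a * x r + c)"
  proof (rule mono_onI)
    fix r s assume "r \<in> {k..n}" "s \<in> {k..n}" "r \<le> s"
    then have "a * x s \<le> a * x r"
      using monotone_onD[OF anti] True by (simp add: mult_left_mono)
    then show "(\<not> 0 \<le> a * x r + c) \<le> (\<not> 0 \<le> a * x s + c)" by auto
  qed
  from mono_on_bool_changes_at_most_once[OF this] assms(2-7) show ?thesis by blast
next
  case False
  have "mono_on {k..n} (\<lambda>r. 0 \<le> a * x r + c)"
  proof (rule mono_onI)
    fix r s assume "r \<in> {k..n}" "s \<in> {k..n}" "r \<le> s"
    then have "a * x r \<le> a * x s"
      using monotone_onD[OF anti] False by (simp add: mult_left_mono_neg)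
    then show "(0 \<le> a * x r + c) \<le> (0 \<le> a * x s + c)" by auto
  qed
  from mono_on_bool_changes_at_most_once[OF this] assms(2-7) show ?thesis by blast
qed

lemma card_le_if_unique_witnesses:
  assumes "\<And>n. n \<in> S \<Longrightarrow> \<exists>i<m. R n i"
    and "\<And>n n' i. n \<in> S \<Longrightarrow> n' \<in> S \<Longrightarrow> R n i \<Longrightarrow> R n' i \<Longrightarrow> n = n'"
  shows "card S \<le> m"
proof -
  obtain f where f: "\<And>n. n \<in> S \<Longrightarrow> f n < m \<and> R n (f n)"
    using assms(1) by metis
  have "inj_on f S"
    using f assms(2) by (metis inj_onI)
  moreover have "f ` S \<subseteq> {..<m}"
    using f by auto
  ultimately show ?thesis
    using card_inj_on_le[of f S "{..<m}"] by simp
qed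

lemma card_output_changes_le_width:
  fixes x :: "nat \<Rightarrow> real"
  assumes w0: "w 0 = 1" and "3 \<le> L" and anti: "antimono_on {1..N} x"
  shows "card {n \<in> {2..N}. unit_feat w W b (x n) L 0 \<noteq> unit_feat w W b (x (n - 1)) L 0} \<le> w 1"
    (is "card ?C \<le> _")
proof (rule card_le_if_unique_witnesses)
  fix n assume "n \<in> ?C"
  then have "unit_feat w W b (x n) L \<noteq> unit_feat w W b (x (n - 1)) L"
    by auto
  then show "\<exists>i<w 1. unit_feat w W b (x n) 2 i \<noteq> unit_feat w W b (x (n - 1)) 2 i"
    using unit_feat_eq_if_layer_2_eq[OF _ \<open>3 \<le> L\<close>] by metis
next
  fix n n' i
  assume "n \<in> ?C" "n' \<in> ?C"
    and "unit_feat w W b (x n) 2 i \<noteq> unit_feat w W b (x (n - 1)) 2 i"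
    and "unit_feat w W b (x n') 2 i \<noteq> unit_feat w W b (x (n' - 1)) 2 i"
  then show "n = n'"
    using affine_threshold_changes_at_most_once[OF anti, of n "W 1 0 i" "b 1 i" n']
    by (auto simp: unit_feat_2[where w = w, OF w0] sign_act_eq_iff)
qed

theorem proposition9:
  fixes L m N :: nat and x :: "nat \<Rightarrow> real"
  assumes "L \<ge> 3" and "m \<ge> 1" and "N \<ge> 1"
    and "\<And>i j. 1 \<le> i \<Longrightarrow> i < j \<Longrightarrow> j \<le> N \<Longrightarrow> x j < x i"
  shows "A_par L (\<lambda>l. if l = 0 \<or> l = L - 1 then 1 else m) N x \<subseteq> H_switch N m"
proof
  fix h assume "h \<in> A_par L (\<lambda>l. if l = 0 \<or> l = L - 1 then 1 else m) N x"
  define w where "w = (\<lambda>l::nat. if l = 0 \<or> l = L - 1 then 1 else m)"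
  obtain W b and \<epsilon> :: real where eps: "\<epsilon> \<in> {-1, 1}"
    and h1: "\<epsilon> * unit_feat w W b (x 1) L 0 = 1"
    and h: "h = (\<lambda>n. if 1 \<le> n \<and> n \<le> N then \<epsilon> * unit_feat w W b (x n) L 0 else 0)"
    using \<open>h \<in> _\<close> unfolding A_par_def w_def by blast
  have "antimono_on {1..N} x"
    by (rule monotone_onI) (use assms(4) in \<open>force simp: order_le_less\<close>)
  moreover have "w 0 = 1" and "w 1 = m"
    using assms(1) by (auto simp: w_def)
  moreover have "{n \<in> {1..N}. switches_at h n}
      = {n \<in> {2..N}. unit_feat w W b (x n) L 0 \<noteq> unit_feat w W b (x (n - 1)) L 0}"
    using eps by (auto simp: switches_at_def h)
  ultimately have "card {n \<in> {1..N}. switches_at h n} \<le> m"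
    using card_output_changes_le_width[of w L N x W b] assms(1) by simp
  moreover have "h n \<in> {-1, 1}" if "1 \<le> n" "n \<le> N" for n
    using that eps unit_feat_in_pm[of L w W b "x n" 0] assms(1) by (auto simp: h)
  moreover have "h n = 0" if "\<not> (1 \<le> n \<and> n \<le> N)" for n
    using that unfolding h by argo
  moreover have "h 1 = 1"
    using h1 assms(3) by (simp add: h)
  ultimately show "h \<in> H_switch N m"
    by (simp add: H_switch_def)
qed

end
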